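(* Let $n\ge1$, identify $\mathbb{R}^{n+1}=\mathbb{R}^n\times\mathbb{R}$, and let $K\subset\mathbb{R}^{n+1}$ be a convex compact set. Suppose there exist $x_1\in\mathbb{R}^n$ and real numbers $0<y_1<y_2$ such that $(x_1,y_1)\notin K$ and $(x_1,y_2)\in K$. Then there exist a positive-valued convex (hence continuous) function $f\colon\mathbb{R}^n\to\mathbb{R}$ and a point $x_2\in\mathbb{R}^n$ such that the epigraph $L=\{(x,y)\mid f(x)\le y\}$ is disjoint from $K$ and the vertical line through $x_2$ contains at least two distinct points of the equidistant set $\{K=L\}=\{p\mid d(p,K)=d(p,L)\}$.
   Context: $d(p,A)=\inf\{|p-q|\mid q\in A\}$ (Euclidean distance). *)

theory Defs
  imports "HOL-Analysis.Analysis"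
begin

definition epigraph_set :: "('a \<Rightarrow> real) \<Rightarrow> ('a \<times> real) set" where
  "epigraph_set f = {(x, y). f x \<le> y}"

definition equidistant_set :: "('b::metric_space) set \<Rightarrow> 'b set \<Rightarrow> 'b set" where
  "equidistant_set K L = {p. infdist p K = infdist p L}"

end

theory Submission
  imports Defs
begin

(*
  Separating (x1, y1) from K by a hyperplane, and using that (x1, y2) lies above it in K, K lies
  strictly above the graph of an affine function h with h x1 > y1. Let u be a direction in which
  h increases and x2 a point of the projection of K maximizing <u, .>: every point of K over x2
  then lies strictly above height y1, so (x2, y1) has positive distance to K. A steep ridge
  f x = max y1 (C + s <u, x2 - x>), with C above K, has an epigraph L disjoint from K that passes
  arbitrarily close to (x2, y1). Along the vertical line through x2 the function d(., K) - d(., L)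
  is therefore positive at height y1, negative at a point of K and positive at height C, so it
  vanishes twice.
*)

lemma convex_on_max:
  assumes "convex_on S f" and "convex_on S g"
  shows "convex_on S (\<lambda>x. max (f x) (g x))"
proof (rule convex_onI)
  fix t :: real and x y
  assume t: "0 < t" "t < 1" and xy: "x \<in> S" "y \<in> S"
  have "(1 - t) * f x + t * f y \<le> (1 - t) * max (f x) (g x) + t * max (f y) (g y)"
    "(1 - t) * g x + t * g y \<le> (1 - t) * max (f x) (g x) + t * max (f y) (g y)"
    using t by (intro add_mono mult_left_mono; simp)+
  then show "max (f ((1 - t) *\<^sub>R x + t *\<^sub>R y)) (g ((1 - t) *\<^sub>R x + t *\<^sub>R y))
      \<le> (1 - t) * max (f x) (g x) + t * max (f y) (g y)"
    using convex_onD[OF assms(1), of t x y] convex_onD[OF assms(2), of t x y] t xy by simp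
qed (use assms convex_on_imp_convex in blast)

lemma convex_on_linear:
  assumes "linear l" and "convex S"
  shows "convex_on S l"
  by (intro convex_onI assms(2)) (simp add: linear_add[OF assms(1)] linear_scale[OF assms(1)])

lemma closed_epigraph_set:
  fixes f :: "'a::topological_space \<Rightarrow> real"
  assumes "continuous_on UNIV f"
  shows "closed (epigraph_set f)"
proof -
  have "continuous_on UNIV (\<lambda>p :: 'a \<times> real. f (fst p))"
    using assms by (rule continuous_on_compose2) (auto intro: continuous_intros)
  then have "closed {p :: 'a \<times> real. f (fst p) \<le> snd p}"
    by (rule closed_Collect_le) (intro continuous_intros)
  moreover have "epigraph_set f = {p. f (fst p) \<le> snd p}"
    by (auto simp: epigraph_set_def)
  ultimately show ?thesis by simp
qed

lemma infdist_less_infdist_if_mem: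
  assumes "p \<in> A" and "p \<notin> B" and "closed B" and "B \<noteq> {}"
  shows "infdist p A < infdist p B"
  using assms infdist_pos_not_in_closed by (simp add: infdist_zero)

lemma two_roots_from_sign_changes:
  fixes g :: "real \<Rightarrow> real"
  assumes "continuous_on {a..c} g" and "a < b" and "b < c"
    and "0 < g a" and "g b < 0" and "0 < g c"
  shows "\<exists>z z'. z \<noteq> z' \<and> g z = 0 \<and> g z' = 0"
proof -
  obtain z where "a \<le> z" "z \<le> b" "g z = 0"
    using IVT2'[of g b 0 a] assms continuous_on_subset by fastforce
  moreover obtain z' where "b \<le> z'" "z' \<le> c" "g z' = 0"
    using IVT'[of g b 0 c] assms continuous_on_subset by fastforce
  moreover have "z \<noteq> b" using \<open>g z = 0\<close> \<open>g b < 0\<close> by auto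
  ultimately show ?thesis by (metis order.antisym)
qed

lemma exists_convex_ridge:
  fixes u x0 :: "'a::real_inner"
  assumes "u \<noteq> 0" and "y0 < C" and "0 < \<epsilon>"
  obtains f where "convex_on UNIV f" and "continuous_on UNIV f" and "\<And>x. y0 \<le> f x"
    and "f x0 = C" and "\<And>x. inner u x \<le> inner u x0 \<Longrightarrow> C \<le> f x"
    and "\<exists>q. dist q x0 < \<epsilon> \<and> f q = y0"
proof -
  define t where "t = \<epsilon> / (2 * norm u)"
  define s where "s = (C - y0) / (t * (norm u)\<^sup>2)"
  have t: "0 < t" and s: "0 < s"
    using assms by (simp_all add: t_def s_def)
  have "convex_on UNIV (\<lambda>x. s * inner (- u) x)"
    by (intro convex_on_cmul convex_on_linear bounded_linear.linear[OF bounded_linear_inner_right])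
      (simp_all add: s less_imp_le)
  then have "convex_on UNIV (\<lambda>x. (C + s * inner u x0) + s * inner (- u) x)"
    by (rule convex_on_add[rotated]) (simp add: convex_on_const)
  then have affine: "convex_on UNIV (\<lambda>x. C + s * (inner u x0 - inner u x))"
    by (simp add: algebra_simps)
  show thesis
  proof (rule that[of "\<lambda>x. max y0 (C + s * (inner u x0 - inner u x))"])
    show "convex_on UNIV (\<lambda>x. max y0 (C + s * (inner u x0 - inner u x)))"
      by (rule convex_on_max[OF _ affine]) (simp add: convex_on_const)
    show "continuous_on UNIV (\<lambda>x. max y0 (C + s * (inner u x0 - inner u x)))"
      by (intro continuous_intros)
    show "C \<le> max y0 (C + s * (inner u x0 - inner u x))" if "inner u x \<le> inner u x0" for x
      using that s by (simp add: le_max_iff_disj)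
    have "dist (x0 + t *\<^sub>R u) x0 < \<epsilon>"
      using t assms by (simp add: dist_norm t_def)
    moreover have "max y0 (C + s * (inner u x0 - inner u (x0 + t *\<^sub>R u))) = y0"
      using t assms(1,2) by (simp add: s_def inner_add_right power2_norm_eq_inner)
    ultimately show "\<exists>q. dist q x0 < \<epsilon> \<and> max y0 (C + s * (inner u x0 - inner u q)) = y0"
      by blast
  qed (use assms(2) in auto)
qed

lemma separating_affine_function_below:
  fixes K :: "('a::euclidean_space \<times> real) set"
  assumes "convex K" and "closed K" and "(x1, y1) \<notin> K" and "(x1, y2) \<in> K" and "y1 < y2"
  obtains b w where "y1 < b - inner w x1" and "\<And>x y. (x, y) \<in> K \<Longrightarrow> b - inner w x < y"
proof -
  obtain a1 a2 b where sep: "inner a1 x1 + a2 * y1 < b"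
    and above: "\<And>x y. (x, y) \<in> K \<Longrightarrow> b < inner a1 x + a2 * y"
    using separating_hyperplane_closed_point[OF assms(1-3)] by fastforce
  have "0 < a2 * (y2 - y1)"
    using above[OF assms(4)] sep by (simp add: algebra_simps)
  then have "0 < a2"
    using assms(5) by (simp add: zero_less_mult_iff)
  show thesis
  proof (rule that[of "b / a2" "a1 /\<^sub>R a2"])
    show "y1 < b / a2 - inner (a1 /\<^sub>R a2) x1"
      using sep \<open>0 < a2\<close> by (simp add: field_simps)
    show "b / a2 - inner (a1 /\<^sub>R a2) x < y" if "(x, y) \<in> K" for x y
      using above[OF that] \<open>0 < a2\<close> by (simp add: field_simps)
  qed
qed

lemma exists_vertical_gap_at_extreme_point:
  fixes K :: "('a::euclidean_space \<times> real) set"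
  assumes "convex K" and "compact K" and "(x1, y1) \<notin> K" and "(x1, y2) \<in> K" and "y1 < y2"
  obtains u x2 y' where "u \<noteq> 0" and "(x2, y') \<in> K"
    and "\<And>x y. (x, y) \<in> K \<Longrightarrow> inner u x \<le> inner u x2"
    and "\<And>y. (x2, y) \<in> K \<Longrightarrow> y1 < y"
proof -
  obtain b w where below: "y1 < b - inner w x1" and above: "\<And>x y. (x, y) \<in> K \<Longrightarrow> b - inner w x < y"
    using separating_affine_function_below[OF assms(1) compact_imp_closed[OF assms(2)] assms(3-5)] by auto
  obtain v :: 'a where "norm v = 1"
    using vector_choose_size[of 1] by auto
  define u where "u = (if w = 0 then v else - w)"
  have "u \<noteq> 0"
    using \<open>norm v = 1\<close> by (auto simp: u_def)
  have "\<exists>p\<in>K. \<forall>p'\<in>K. inner u (fst p') \<le> inner u (fst p)"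
    using assms(4) by (intro continuous_attains_sup[OF assms(2)] continuous_intros) auto
  then obtain x2 y' where "(x2, y') \<in> K" and extreme: "\<And>x y. (x, y) \<in> K \<Longrightarrow> inner u x \<le> inner u x2"
    by fastforce
  have "y1 < y" if "(x2, y) \<in> K" for y
  proof (cases "w = 0")
    case True
    then show ?thesis using below above[OF that] by simp
  next
    case False
    then have "inner w x2 \<le> inner w x1"
      using extreme[OF assms(4)] by (simp add: u_def)
    then show ?thesis using below above[OF that] by simp
  qed
  with that \<open>u \<noteq> 0\<close> extreme \<open>(x2, y') \<in> K\<close> show thesis by blast
qed

lemma two_equidistant_points_on_vertical_line:
  fixes K L :: "('a::metric_space \<times> real) set"
  assumes "closed K" and "closed L" and "K \<inter> L = {}"
    and "infdist (x, a) L < infdist (x, a) K" and "(x, b) \<in> K" and "(x, c) \<in> L"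
    and "a < b" and "b < c"
  shows "\<exists>y y'. y \<noteq> y' \<and> (x, y) \<in> equidistant_set K L \<and> (x, y') \<in> equidistant_set K L"
proof -
  define g where "g y = infdist (x, y) K - infdist (x, y) L" for y
  have "continuous_on {a..c} g"
    unfolding g_def by (intro continuous_intros)
  moreover have "0 < g a"
    using assms(4) by (simp add: g_def)
  moreover have "g b < 0"
    using infdist_less_infdist_if_mem[of "(x, b)" K L] assms by (auto simp: g_def)
  moreover have "0 < g c"
    using infdist_less_infdist_if_mem[of "(x, c)" L K] assms by (auto simp: g_def)
  ultimately obtain z z' where "z \<noteq> z'" "g z = 0" "g z' = 0"
    using two_roots_from_sign_changes assms(7,8) by blast
  then show ?thesis
    by (auto simp: equidistant_set_def g_def)
qed

lemma exists_convex_epigraph_with_two_equidistant_points: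
  fixes K :: "('a::real_inner \<times> real) set"
  assumes "closed K" and "u \<noteq> 0" and "(x0, y') \<in> K"
    and extreme: "\<And>x y. (x, y) \<in> K \<Longrightarrow> inner u x \<le> inner u x0"
    and above: "\<And>y. (x0, y) \<in> K \<Longrightarrow> y0 < y"
    and below: "\<And>x y. (x, y) \<in> K \<Longrightarrow> y < C"
  obtains f where "\<And>x. y0 \<le> f x" and "convex_on UNIV f" and "epigraph_set f \<inter> K = {}"
    and "\<exists>y y'. y \<noteq> y' \<and> (x0, y) \<in> equidistant_set K (epigraph_set f)
      \<and> (x0, y') \<in> equidistant_set K (epigraph_set f)"
proof -
  have "0 < infdist (x0, y0) K"
    using above assms(1,3) by (auto intro: infdist_pos_not_in_closed)
  moreover have "y0 < C"
    using above below assms(3) by force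
  ultimately obtain f where "convex_on UNIV f" "continuous_on UNIV f" "\<And>x. y0 \<le> f x"
    and "f x0 = C" and ridge: "\<And>x. inner u x \<le> inner u x0 \<Longrightarrow> C \<le> f x"
    and "\<exists>q. dist q x0 < infdist (x0, y0) K \<and> f q = y0"
    using exists_convex_ridge[OF \<open>u \<noteq> 0\<close>] by metis
  then obtain q where "dist q x0 < infdist (x0, y0) K" "(q, y0) \<in> epigraph_set f"
    by (auto simp: epigraph_set_def)
  then have closer: "infdist (x0, y0) (epigraph_set f) < infdist (x0, y0) K"
    using infdist_le[of "(q, y0)" "epigraph_set f" "(x0, y0)"] by (simp add: dist_Pair_Pair dist_commute)
  have disjoint: "K \<inter> epigraph_set f = {}"
    using extreme ridge below by (force simp: epigraph_set_def)
  have top: "(x0, C) \<in> epigraph_set f"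
    using \<open>f x0 = C\<close> by (simp add: epigraph_set_def)
  show thesis
  proof (rule that)
    show "\<exists>y y'. y \<noteq> y' \<and> (x0, y) \<in> equidistant_set K (epigraph_set f)
        \<and> (x0, y') \<in> equidistant_set K (epigraph_set f)"
      by (rule two_equidistant_points_on_vertical_line[OF \<open>closed K\<close>
            closed_epigraph_set[OF \<open>continuous_on UNIV f\<close>] disjoint closer \<open>(x0, y') \<in> K\<close> top
            above[OF \<open>(x0, y') \<in> K\<close>] below[OF \<open>(x0, y') \<in> K\<close>]])
  qed (use disjoint \<open>convex_on UNIV f\<close> \<open>\<And>x. y0 \<le> f x\<close> in auto)
qed

theorem theorem4:
  fixes K :: "('a::euclidean_space \<times> real) set"
    and x1 :: 'a and y1 y2 :: real
  assumes "convex K" and "compact K"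
    and "0 < y1" and "y1 < y2"
    and "(x1, y1) \<notin> K" and "(x1, y2) \<in> K"
  shows "\<exists>(f :: 'a \<Rightarrow> real) x2.
           (\<forall>x. 0 < f x) \<and> convex_on UNIV f \<and>
           epigraph_set f \<inter> K = {} \<and>
           (\<exists>y y'. y \<noteq> y' \<and>
              (x2, y) \<in> equidistant_set K (epigraph_set f) \<and>
              (x2, y') \<in> equidistant_set K (epigraph_set f))"
proof -
  obtain u x2 y' where u: "u \<noteq> 0" and x2: "(x2, y') \<in> K"
    and extreme: "\<And>x y. (x, y) \<in> K \<Longrightarrow> inner u x \<le> inner u x2"
    and gap: "\<And>y. (x2, y) \<in> K \<Longrightarrow> y1 < y"
    using exists_vertical_gap_at_extreme_point[OF assms(1,2,5,6,4)] by auto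
  obtain B where "\<And>x y. (x, y) \<in> K \<Longrightarrow> \<bar>y\<bar> \<le> B"
    using bounded_snd[OF compact_imp_bounded[OF assms(2)]] by (force simp: bounded_iff)
  then have below: "\<And>x y. (x, y) \<in> K \<Longrightarrow> y < B + 1"
    by force
  obtain f where "\<And>x. y1 \<le> f x" and "convex_on UNIV f" and "epigraph_set f \<inter> K = {}"
    and "\<exists>y y'. y \<noteq> y' \<and> (x2, y) \<in> equidistant_set K (epigraph_set f)
      \<and> (x2, y') \<in> equidistant_set K (epigraph_set f)"
    using exists_convex_epigraph_with_two_equidistant_points[OF compact_imp_closed[OF assms(2)] u x2]
      extreme gap below by blast
  moreover have "\<forall>x. 0 < f x"
    using \<open>\<And>x. y1 \<le> f x\<close> assms(3) by (meson less_le_trans)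
  ultimately show ?thesis
    by blast
qed

end
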